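(* Let $G$ be a signed cyclic graph. Then $$F[G](A,B,d)=\sum_{S\in\mathscr{S}(G)}A^{e_{+}(S)+e_{-}(G-S)}B^{e_{-}(S)+e_{+}(G-S)}d^{bc(S)-1},$$ where the sum is over the set $\mathscr{S}(G)$ of all spanning subgraphs $S$ of $G$.
   Context: A signed cyclic graph is a finite graph with a cyclic ordering of half-edges at each vertex (equivalently an orientable ribbon graph) and a sign $\pm$ on each edge. A spanning subgraph $S$ consists of all vertices of $G$ and a subset of the edges, with the induced cyclic orders; $G-S$ is the spanning subgraph with exactly the edges of $G$ not in $S$; $e_{+}(S)$, $e_{-}(S)$ are the numbers of positive and negative edges of $S$; $bc(S)$ is the number of boundary components of the ribbon graph of $S$ (vertex discs with ribbons for the edges of $S$ attached in the cyclic order). The polynomial $F[G]$ is defined by a deletion–marking recursion: edges may be "marked"; for an unmarked edge $e$, $G-e$ deletes $e$ and $G(\bar e)$ keeps $e$ and marks it; $F[G]=B\,F[G-e]+A\,F[G(\bar e)]$ if $e$ is positive, $F[G]=A\,F[G-e]+B\,F[G(\bar e)]$ if $e$ is negative; and if $H$ is a spanning subgraph all of whose edges are marked, $F[H]=d^{bc(H)-1}$. *)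

theory Defs
  imports Main
begin

text \<open>
A signed cyclic graph is encoded combinatorially:
  V     : finite vertex set,
  E     : finite edge set,
  half-edges of E are the pairs (e, b) with e in E and b :: bool (the two ends of e),
  ends  : maps each half-edge to its incident vertex (a loop has both ends at one vertex),
  rot   : permutation of the half-edges whose cycles are exactly the sets of half-edges
          at each vertex (the cyclic order at each vertex),
  pos   : the sign of each edge (True = positive, False = negative).
\<close>

definition halfedges :: "'e set \<Rightarrow> ('e \<times> bool) set" where
  "halfedges S = S \<times> UNIV"

definition flip :: "'e \<times> bool \<Rightarrow> 'e \<times> bool" where
  "flip h = (fst h, \<not> snd h)"

definition signed_cyclic_graph ::
  "'v set \<Rightarrow> 'e set \<Rightarrow> ('e \<times> bool \<Rightarrow> 'v) \<Rightarrow> ('e \<times> bool \<Rightarrow> 'e \<times> bool) \<Rightarrow> bool" where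
  "signed_cyclic_graph V E ends rot \<longleftrightarrow>
     finite V \<and> finite E \<and>
     (\<forall>h \<in> halfedges E. ends h \<in> V) \<and>
     bij_betw rot (halfedges E) (halfedges E) \<and>
     (\<forall>h \<in> halfedges E. ends (rot h) = ends h) \<and>
     (\<forall>h \<in> halfedges E. \<forall>h' \<in> halfedges E. ends h = ends h' \<longrightarrow> (\<exists>n. (rot ^^ n) h = h'))"

definition induced_rot ::
  "('e \<times> bool \<Rightarrow> 'e \<times> bool) \<Rightarrow> 'e set \<Rightarrow> 'e \<times> bool \<Rightarrow> 'e \<times> bool" where
  "induced_rot rot S h = (rot ^^ (LEAST n. 0 < n \<and> (rot ^^ n) h \<in> halfedges S)) h"

definition face_perm ::
  "('e \<times> bool \<Rightarrow> 'e \<times> bool) \<Rightarrow> 'e set \<Rightarrow> 'e \<times> bool \<Rightarrow> 'e \<times> bool" where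
  "face_perm rot S h = induced_rot rot S (flip h)"

definition orbit_of :: "('a \<Rightarrow> 'a) \<Rightarrow> 'a \<Rightarrow> 'a set" where
  "orbit_of f x = {(f ^^ n) x | n. True}"

text \<open>Number of boundary components of the ribbon graph of the spanning subgraph S:
  boundary cycles through ribbons (orbits of the face permutation on half-edges of S)
  plus one boundary circle for each vertex incident to no edge of S.\<close>
definition bc ::
  "'v set \<Rightarrow> ('e \<times> bool \<Rightarrow> 'v) \<Rightarrow> ('e \<times> bool \<Rightarrow> 'e \<times> bool) \<Rightarrow> 'e set \<Rightarrow> nat" where
  "bc V ends rot S =
     card (orbit_of (face_perm rot S) ` halfedges S)
     + card {v \<in> V. \<forall>h \<in> halfedges S. ends h \<noteq> v}"

definition e_plus :: "('e \<Rightarrow> bool) \<Rightarrow> 'e set \<Rightarrow> nat" where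
  "e_plus pos S = card {e \<in> S. pos e}"

definition e_minus :: "('e \<Rightarrow> bool) \<Rightarrow> 'e set \<Rightarrow> nat" where
  "e_minus pos S = card {e \<in> S. \<not> pos e}"

text \<open>A state is (S, M): the spanning subgraph with
  edge set S (with induced cyclic orders) in which the edges in M are marked.
  Frec S M p means that p is a value of F for the state (S, M) obtainable by applying
  the recursion (in any order of edge choices).\<close>
inductive Frec ::
  "'v set \<Rightarrow> ('e \<times> bool \<Rightarrow> 'v) \<Rightarrow> ('e \<times> bool \<Rightarrow> 'e \<times> bool) \<Rightarrow> ('e \<Rightarrow> bool)
   \<Rightarrow> 'a::field \<Rightarrow> 'a \<Rightarrow> 'a \<Rightarrow> 'e set \<Rightarrow> 'e set \<Rightarrow> 'a \<Rightarrow> bool"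
  for V ends rot pos A B d where
  all_marked: "Frec V ends rot pos A B d S S (d powi (int (bc V ends rot S) - 1))"
| positive: "\<lbrakk>e \<in> S; e \<notin> M; pos e;
              Frec V ends rot pos A B d (S - {e}) M p;
              Frec V ends rot pos A B d S (insert e M) q\<rbrakk>
             \<Longrightarrow> Frec V ends rot pos A B d S M (B * p + A * q)"
| negative: "\<lbrakk>e \<in> S; e \<notin> M; \<not> pos e;
              Frec V ends rot pos A B d (S - {e}) M p;
              Frec V ends rot pos A B d S (insert e M) q\<rbrakk>
             \<Longrightarrow> Frec V ends rot pos A B d S M (A * p + B * q)"

end

theory Submission
  imports Defs
begin

(* Each run of the recursion decides every unmarked edge of a state (S, M) once, deleting
   it or marking it, so it expands F[(S, M)] over the edge sets T with M \<subseteq> T \<subseteq> S, the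
   edges of T - M and of S - T contributing one factor A or B each according to their sign.
   This state sum satisfies both recursion rules, hence it is the value of every run. *)

lemma card_Collect_insert:
  assumes "finite X" "e \<notin> X"
  shows "card {x \<in> insert e X. P x} = card {x \<in> X. P x} + (if P e then 1 else 0)"
proof -
  have "{x \<in> insert e X. P x} = (if P e then insert e {x \<in> X. P x} else {x \<in> X. P x})"
    by auto
  then show ?thesis using assms by simp
qed

lemma e_plus_insert:
  "finite X \<Longrightarrow> e \<notin> X \<Longrightarrow> e_plus pos (insert e X) = e_plus pos X + (if pos e then 1 else 0)"
  unfolding e_plus_def by (rule card_Collect_insert)

lemma e_minus_insert:
  "finite X \<Longrightarrow> e \<notin> X \<Longrightarrow> e_minus pos (insert e X) = e_minus pos X + (if pos e then 0 else 1)"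
  unfolding e_minus_def by (subst card_Collect_insert) auto

lemma sum_subset_interval_split:
  assumes "finite S" "e \<in> S" "e \<notin> M"
  shows "(\<Sum>T | M \<subseteq> T \<and> T \<subseteq> S. f T) =
         (\<Sum>T | M \<subseteq> T \<and> T \<subseteq> S - {e}. f T) + (\<Sum>T | insert e M \<subseteq> T \<and> T \<subseteq> S. f T)"
proof -
  have "{T. M \<subseteq> T \<and> T \<subseteq> S} = {T. M \<subseteq> T \<and> T \<subseteq> S - {e}} \<union> {T. insert e M \<subseteq> T \<and> T \<subseteq> S}"
    using assms(3) by auto
  moreover have "finite {T. M \<subseteq> T \<and> T \<subseteq> S}"
    using assms(1) by (simp add: finite_subset[of _ "Pow S"] subset_eq)
  ultimately show ?thesis
    by (subst sum.union_disjoint[symmetric]) auto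
qed

definition state_sum ::
  "'v set \<Rightarrow> ('e \<times> bool \<Rightarrow> 'v) \<Rightarrow> ('e \<times> bool \<Rightarrow> 'e \<times> bool) \<Rightarrow> ('e \<Rightarrow> bool)
   \<Rightarrow> 'a::field \<Rightarrow> 'a \<Rightarrow> 'a \<Rightarrow> 'e set \<Rightarrow> 'e set \<Rightarrow> 'a" where
  "state_sum V ends rot pos A B d S M =
     (\<Sum>T | M \<subseteq> T \<and> T \<subseteq> S.
        A ^ (e_plus pos (T - M) + e_minus pos (S - T)) *
        B ^ (e_minus pos (T - M) + e_plus pos (S - T)) *
        d powi (int (bc V ends rot T) - 1))"

lemma state_sum_all_marked:
  "state_sum V ends rot pos A B d S S = d powi (int (bc V ends rot S) - 1)"
proof -
  have "{T. S \<subseteq> T \<and> T \<subseteq> S} = {S}" by auto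
  then show ?thesis by (simp add: state_sum_def e_plus_def e_minus_def)
qed

lemma state_sum_split:
  assumes fin: "finite S" and "e \<in> S" "e \<notin> M"
  shows "state_sum V ends rot pos A B d S M =
           (if pos e then B else A) * state_sum V ends rot pos A B d (S - {e}) M
         + (if pos e then A else B) * state_sum V ends rot pos A B d S (insert e M)"
proof -
  let ?w = "\<lambda>S M T. A ^ (e_plus pos (T - M) + e_minus pos (S - T)) *
                     B ^ (e_minus pos (T - M) + e_plus pos (S - T)) *
                     d powi (int (bc V ends rot T) - 1)"
  have deleted: "?w S M T = (if pos e then B else A) * ?w (S - {e}) M T"
    if "T \<subseteq> S - {e}" for T
  proof -
    have split: "S - T = insert e (S - {e} - T)" using that assms by auto
    have rest: "finite (S - {e} - T)" "e \<notin> S - {e} - T" using fin by auto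
    show ?thesis
      unfolding split e_plus_insert[OF rest] e_minus_insert[OF rest]
      by (simp add: power_add mult_ac)
  qed
  have marked: "?w S M T = (if pos e then A else B) * ?w S (insert e M) T"
    if "insert e M \<subseteq> T" "T \<subseteq> S" for T
  proof -
    have split: "T - M = insert e (T - insert e M)" using that assms by auto
    have rest: "finite (T - insert e M)" "e \<notin> T - insert e M"
      using that fin finite_subset by auto
    show ?thesis
      unfolding split e_plus_insert[OF rest] e_minus_insert[OF rest]
      by (simp add: power_add mult_ac)
  qed
  show ?thesis
    unfolding state_sum_def sum_subset_interval_split[OF assms] sum_distrib_left
    using deleted marked by (intro arg_cong2[where f = "(+)"] sum.cong) auto
qed

lemma Frec_eq_state_sum:
  "Frec V ends rot pos A B d S M p \<Longrightarrow> finite S \<Longrightarrow> p = state_sum V ends rot pos A B d S M"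
proof (induction rule: Frec.induct)
  case (all_marked S)
  then show ?case by (simp add: state_sum_all_marked)
next
  case (positive e S M p q)
  then show ?case by (simp add: state_sum_split)
next
  case (negative e S M p q)
  then show ?case by (simp add: state_sum_split)
qed

lemma Frec_exists:
  "finite S \<Longrightarrow> M \<subseteq> S \<Longrightarrow> \<exists>p. Frec V ends rot pos A B d S M p"
proof (induction "card (S - M)" arbitrary: S M rule: less_induct)
  case less
  show ?case
  proof (cases "S = M")
    case True
    then show ?thesis using Frec.all_marked by blast
  next
    case False
    then obtain e where e: "e \<in> S" "e \<notin> M" using less.prems by blast
    have "card (S - {e} - M) < card (S - M)"
      using e less.prems by (intro psubset_card_mono) auto
    then obtain p where p: "Frec V ends rot pos A B d (S - {e}) M p"
      using less e by blast
    have "card (S - insert e M) < card (S - M)"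
      using e less.prems by (intro psubset_card_mono) auto
    then obtain q where q: "Frec V ends rot pos A B d S (insert e M) q"
      using less e by blast
    from p q e show ?thesis
      by (cases "pos e") (blast intro: Frec.positive Frec.negative)+
  qed
qed

theorem mainTheorem6:
  fixes V :: "'v set" and E :: "'e set" and ends :: "'e \<times> bool \<Rightarrow> 'v"
    and rot :: "'e \<times> bool \<Rightarrow> 'e \<times> bool" and pos :: "'e \<Rightarrow> bool"
    and A B d :: "'a::field"
  assumes "signed_cyclic_graph V E ends rot"
  shows "(\<exists>p. Frec V ends rot pos A B d E {} p) \<and>
         (\<forall>p. Frec V ends rot pos A B d E {} p \<longrightarrow>
            p = (\<Sum>S \<in> Pow E.
                   A ^ (e_plus pos S + e_minus pos (E - S)) *
                   B ^ (e_minus pos S + e_plus pos (E - S)) *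
                   d powi (int (bc V ends rot S) - 1)))"
proof -
  have fin: "finite E" using assms by (simp add: signed_cyclic_graph_def)
  have "{S. {} \<subseteq> S \<and> S \<subseteq> E} = Pow E" by auto
  then have state_sum_eq: "state_sum V ends rot pos A B d E {} = (\<Sum>S \<in> Pow E.
                   A ^ (e_plus pos S + e_minus pos (E - S)) *
                   B ^ (e_minus pos S + e_plus pos (E - S)) *
                   d powi (int (bc V ends rot S) - 1))"
    by (simp add: state_sum_def)
  show ?thesis
  proof (intro conjI allI impI)
    show "\<exists>p. Frec V ends rot pos A B d E {} p" using Frec_exists[OF fin] by blast
  next
    fix p assume "Frec V ends rot pos A B d E {} p"
    with Frec_eq_state_sum fin state_sum_eq show "p = (\<Sum>S \<in> Pow E.
                   A ^ (e_plus pos S + e_minus pos (E - S)) *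
                   B ^ (e_minus pos S + e_plus pos (E - S)) *
                   d powi (int (bc V ends rot S) - 1))" by metis
  qed
qed

end
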